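(* Let $X$ be a Banach lattice with order continuous norm, let $S$ be a convex $C_0$-semigroup on $X$ with generator $A$, and let $T$ be a convex $C_0$-semigroup on $X$ with generator $B$ such that $B\subset A$, i.e. $D(B)\subset D(A)$ and $A|_{D(B)}=B$. If $D(B)$ is dense in $X$, then $S(t)=T(t)$ for all $t\ge 0$.
   Context: A Banach lattice $X$ has order continuous norm if $\|x_\alpha\|\to 0$ for every net $x_\alpha\downarrow 0$. An operator $T\colon X\to X$ is convex if $T(\lambda x+(1-\lambda)y)\le \lambda Tx+(1-\lambda)Ty$ for all $x,y$, $\lambda\in[0,1]$, and bounded if $\sup_{\|x\|\le r}\|Tx\|<\infty$ for all $r>0$. A convex $C_0$-semigroup is a family $(S(t))_{t\ge0}$ of bounded convex operators $X\to X$ with $S(0)=\mathrm{id}$, $S(t+s)=S(t)S(s)$ for all $s,t\ge0$, and $S(t)x\to x$ as $t\downarrow 0$ for all $x$. Its generator is $Ax:=\lim_{h\downarrow 0}\frac{S(h)x-x}{h}$ with domain $D(A)$ the set of $x$ for which this norm limit exists. *)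

theory Defs
  imports "HOL-Analysis.Analysis"
begin

class banach_lattice = banach + ordered_real_vector + lattice +
  assumes lattice_norm: "sup x (- x) \<le> sup y (- y) \<Longrightarrow> norm x \<le> norm y"

definition net_decreasing_to_zero ::
  "'i set \<Rightarrow> ('i \<Rightarrow> 'i \<Rightarrow> bool) \<Rightarrow> ('i \<Rightarrow> 'a::banach_lattice) \<Rightarrow> bool" where
  "net_decreasing_to_zero I le x \<longleftrightarrow>
     I \<noteq> {} \<and>
     (\<forall>a\<in>I. le a a) \<and>
     (\<forall>a\<in>I. \<forall>b\<in>I. \<forall>c\<in>I. le a b \<longrightarrow> le b c \<longrightarrow> le a c) \<and>
     (\<forall>a\<in>I. \<forall>b\<in>I. \<exists>c\<in>I. le a c \<and> le b c) \<and>
     (\<forall>a\<in>I. \<forall>b\<in>I. le a b \<longrightarrow> x b \<le> x a) \<and>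
     (\<forall>a\<in>I. 0 \<le> x a) \<and>
     (\<forall>z. (\<forall>a\<in>I. z \<le> x a) \<longrightarrow> z \<le> 0)"

definition net_norm_to_zero ::
  "'i set \<Rightarrow> ('i \<Rightarrow> 'i \<Rightarrow> bool) \<Rightarrow> ('i \<Rightarrow> 'a::banach_lattice) \<Rightarrow> bool" where
  "net_norm_to_zero I le x \<longleftrightarrow>
     (\<forall>e>0. \<exists>a\<in>I. \<forall>b\<in>I. le a b \<longrightarrow> norm (x b) < e)"

text \<open>Order continuous norm. Nets are indexed by directed subsets of the type 'a set
  (index sets of arbitrary size up to 2^|X| suffice).\<close>
definition order_continuous_norm :: "'a::banach_lattice itself \<Rightarrow> bool" where
  "order_continuous_norm _ \<longleftrightarrow>
     (\<forall>(I::'a set set) le (x::'a set \<Rightarrow> 'a).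
        net_decreasing_to_zero I le x \<longrightarrow> net_norm_to_zero I le x)"

definition convex_operator :: "('a::banach_lattice \<Rightarrow> 'a) \<Rightarrow> bool" where
  "convex_operator T \<longleftrightarrow>
     (\<forall>x y. \<forall>c::real. 0 \<le> c \<and> c \<le> 1 \<longrightarrow>
        T (c *\<^sub>R x + (1 - c) *\<^sub>R y) \<le> c *\<^sub>R T x + (1 - c) *\<^sub>R T y)"

definition bounded_operator :: "('a::banach_lattice \<Rightarrow> 'a) \<Rightarrow> bool" where
  "bounded_operator T \<longleftrightarrow> (\<forall>r>0. \<exists>M. \<forall>x. norm x \<le> r \<longrightarrow> norm (T x) \<le> M)"

definition convex_C0_semigroup :: "(real \<Rightarrow> 'a::banach_lattice \<Rightarrow> 'a) \<Rightarrow> bool" where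
  "convex_C0_semigroup S \<longleftrightarrow>
     (\<forall>t\<ge>0. convex_operator (S t) \<and> bounded_operator (S t)) \<and>
     S 0 = id \<and>
     (\<forall>s\<ge>0. \<forall>t\<ge>0. S (t + s) = S t \<circ> S s) \<and>
     (\<forall>x. ((\<lambda>t. S t x) \<longlongrightarrow> x) (at_right 0))"

definition generator_domain :: "(real \<Rightarrow> 'a::banach_lattice \<Rightarrow> 'a) \<Rightarrow> 'a set" where
  "generator_domain S = {x. \<exists>y. ((\<lambda>h. (1 / h) *\<^sub>R (S h x - x)) \<longlongrightarrow> y) (at_right 0)}"

definition generator :: "(real \<Rightarrow> 'a::banach_lattice \<Rightarrow> 'a) \<Rightarrow> 'a \<Rightarrow> 'a" where
  "generator S x = Lim (at_right 0) (\<lambda>h. (1 / h) *\<^sub>R (S h x - x))"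

end

theory Submission
  imports Defs
begin

text \<open>For \<open>x \<in> D(B)\<close> and \<open>t \<ge> 0\<close> the path \<open>w s = S (t - s) (T s x)\<close> runs from \<open>S t x\<close> to
  \<open>T t x\<close>. Writing \<open>y = T s x\<close>, its right difference quotient at \<open>s\<close> is controlled, through a
  Lipschitz constant of \<open>S (t - s - h)\<close> near \<open>y\<close>, by \<open>(T h y - S h y) / h\<close>, which tends to
  \<open>B y - A y = 0\<close> provided \<open>y\<close> stays in \<open>D(B)\<close>. The Lipschitz constants come from convexity: a
  convex operator bounded on a ball is Lipschitz on the half ball, and a Baire category argument
  bounds \<open>S r\<close> uniformly for \<open>r\<close> near any given time. Order continuity of the norm is what
  keeps \<open>D(B)\<close> invariant under \<open>T s\<close>: the difference quotients of the convex operator \<open>T s\<close>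
  in a fixed direction are monotone and bounded below, hence convergent. Being also left
  continuous, \<open>w\<close> is constant, so \<open>S t\<close> and \<open>T t\<close> agree on the dense set \<open>D(B)\<close> and,
  both being continuous, everywhere.\<close>

section \<open>Banach lattices\<close>

lemma sup_uminus_nonneg: "0 \<le> sup x (- x :: 'a::banach_lattice)"
proof -
  have "x + - x \<le> sup x (- x) + sup x (- x)"
    by (intro add_mono) auto
  then have "0 \<le> (1/2::real) *\<^sub>R (sup x (- x) + sup x (- x))"
    by (intro scaleR_nonneg_nonneg) auto
  then show ?thesis
    by (simp add: scaleR_add_right[symmetric])
qed

lemma sup_uminus_eq_self: "0 \<le> (x::'a::banach_lattice) \<Longrightarrow> sup x (- x) = x"
  by (metis neg_le_0_iff_le order.trans sup.absorb1)

lemma norm_sup_uminus: "norm (sup x (- x)) = norm (x::'a::banach_lattice)"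
  by (intro antisym lattice_norm) (simp_all add: sup_uminus_eq_self sup_uminus_nonneg)

lemma norm_mono_nonneg: "0 \<le> (x::'a::banach_lattice) \<Longrightarrow> x \<le> y \<Longrightarrow> norm x \<le> norm y"
  by (rule lattice_norm) (simp add: sup_uminus_eq_self)

lemma norm_le_between:
  fixes lo v hi :: "'a::banach_lattice"
  assumes "lo \<le> v" "v \<le> hi"
  shows "norm v \<le> norm lo + norm hi"
proof -
  define w where "w = sup lo (- lo) + sup hi (- hi)"
  have "v \<le> sup hi (- hi)"
    using assms(2) by (meson order.trans sup.cobounded1)
  then have "v \<le> w"
    unfolding w_def by (rule add_increasing[OF sup_uminus_nonneg])
  have "- v \<le> sup lo (- lo)"
    using assms(1) by (meson neg_le_iff_le order.trans sup.cobounded2)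
  then have "- v \<le> w"
    unfolding w_def by (rule add_increasing2[OF sup_uminus_nonneg])
  have "0 \<le> w"
    using sup_uminus_nonneg[of lo] sup_uminus_nonneg[of hi] by (simp add: w_def)
  with \<open>v \<le> w\<close> \<open>- v \<le> w\<close> have "norm v \<le> norm w"
    by (intro lattice_norm) (simp add: sup_uminus_eq_self)
  also have "\<dots> \<le> norm lo + norm hi"
    using norm_triangle_ineq[of "sup lo (- lo)" "sup hi (- hi)"] by (simp add: w_def norm_sup_uminus)
  finally show ?thesis .
qed

lemma banach_lattice_Archimedean:
  fixes z d :: "'a::banach_lattice"
  assumes "\<And>n::nat. real n *\<^sub>R z \<le> d"
  shows "z \<le> 0"
proof -
  define p where "p = sup z 0"
  have "norm p \<le> norm (sup d 0) / real n" if "n > 0" for n :: nat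
  proof -
    have "z \<le> (1 / real n) *\<^sub>R d"
      using scaleR_left_mono[OF assms[of n], of "1 / real n"] that by simp
    also have "\<dots> \<le> (1 / real n) *\<^sub>R sup d 0"
      by (intro scaleR_left_mono) auto
    finally have "p \<le> (1 / real n) *\<^sub>R sup d 0"
      by (simp add: p_def scaleR_nonneg_nonneg)
    then have "norm p \<le> norm ((1 / real n) *\<^sub>R sup d 0)"
      by (rule norm_mono_nonneg[rotated]) (simp add: p_def)
    then show ?thesis by simp
  qed
  then have "norm p \<le> 0"
    by (intro tendsto_le[OF trivial_limit_sequentially lim_const_over_n[of "norm (sup d 0)"]
          tendsto_const] eventually_sequentiallyI[of 1]) auto
  then have "p = 0"
    by simp
  then show ?thesis
    by (metis p_def sup.cobounded1)
qed

section \<open>Convex operators\<close>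

lemma convex_operator_chord:
  fixes F :: "'a::banach_lattice \<Rightarrow> 'a"
  assumes "convex_operator F" "0 \<le> \<mu>" "\<mu> \<le> 1"
  shows "F (\<mu> *\<^sub>R z + (1 - \<mu>) *\<^sub>R a) - F a \<le> \<mu> *\<^sub>R (F z - F a)"
proof -
  have "F (\<mu> *\<^sub>R z + (1 - \<mu>) *\<^sub>R a) \<le> \<mu> *\<^sub>R F z + (1 - \<mu>) *\<^sub>R F a"
    using assms unfolding convex_operator_def by blast
  then show ?thesis
    by (simp add: algebra_simps)
qed

lemma convex_operator_midpoint:
  fixes F :: "'a::banach_lattice \<Rightarrow> 'a"
  assumes "convex_operator F"
  shows "F ((1/2) *\<^sub>R (x + y)) \<le> (1/2) *\<^sub>R (F x + F y)"
  using assms[unfolded convex_operator_def, rule_format, of "1/2" x y]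
  by (simp add: scaleR_add_right)

text \<open>Prolonging the segment from \<open>a\<close> to \<open>b\<close> by \<open>\<rho>/2\<close> beyond \<open>b\<close> gives a point \<open>z\<close> of
  \<open>cball c \<rho>\<close> with \<open>b = \<mu> z + (1 - \<mu>) a\<close> and \<open>\<mu> \<le> 2 dist b a / \<rho>\<close>; convexity then bounds
  \<open>F b - F a\<close> by \<open>\<mu> (F z - F a)\<close>.\<close>

lemma convex_operator_increment_upper_bound:
  fixes F :: "'a::banach_lattice \<Rightarrow> 'a"
  assumes F: "convex_operator F" and \<rho>: "0 < \<rho>"
    and M: "\<And>z. z \<in> cball c \<rho> \<Longrightarrow> norm (F z) \<le> M"
    and a: "a \<in> cball c (\<rho>/2)" and b: "b \<in> cball c (\<rho>/2)"
  shows "\<exists>u. F b - F a \<le> u \<and> norm u \<le> 4 * M / \<rho> * dist b a"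
proof (cases "a = b")
  case True
  then show ?thesis by auto
next
  case False
  have M0: "0 \<le> M"
    using M[of c] \<rho> by (meson centre_in_cball less_imp_le norm_ge_zero order_trans)
  define d where "d = dist b a"
  have d: "0 < d" using False by (simp add: d_def)
  define \<mu> where "\<mu> = 2 * d / (2 * d + \<rho>)"
  define z where "z = b + (\<rho> / (2 * d)) *\<^sub>R (b - a)"
  have \<mu>: "0 \<le> \<mu>" "\<mu> \<le> 1" "\<mu> \<le> 2 * d / \<rho>"
    using d \<rho> by (auto simp: \<mu>_def field_simps)
  have "dist c z \<le> dist c b + norm ((\<rho> / (2 * d)) *\<^sub>R (b - a))"
    unfolding z_def dist_norm by (metis diff_diff_eq2 norm_triangle_ineq4 add.commute diff_diff_eq)
  also have "norm ((\<rho> / (2 * d)) *\<^sub>R (b - a)) = \<rho> / 2"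
    using d \<rho> by (simp add: d_def dist_norm)
  finally have z: "z \<in> cball c \<rho>"
    using b by simp
  have "b = \<mu> *\<^sub>R z + (1 - \<mu>) *\<^sub>R a"
  proof -
    have "\<mu> *\<^sub>R z + (1 - \<mu>) *\<^sub>R a = a + (\<mu> * (1 + \<rho> / (2 * d))) *\<^sub>R (b - a)"
      by (simp add: z_def algebra_simps)
    also have "\<mu> * (1 + \<rho> / (2 * d)) = 1"
      using d \<rho> by (simp add: \<mu>_def divide_simps)
    finally show ?thesis by simp
  qed
  then have "F b - F a \<le> \<mu> *\<^sub>R (F z - F a)"
    using convex_operator_chord[OF F \<mu>(1,2)] by metis
  moreover have "norm (\<mu> *\<^sub>R (F z - F a)) \<le> 4 * M / \<rho> * dist b a"
  proof -
    have "norm (F z - F a) \<le> 2 * M"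
      using norm_triangle_ineq4[of "F z" "F a"] M[OF z] M[of a] a \<rho> by (simp add: dist_commute)
    then have "norm (\<mu> *\<^sub>R (F z - F a)) \<le> \<mu> * (2 * M)"
      using \<mu> by (simp add: mult_left_mono)
    also have "\<dots> \<le> 2 * d / \<rho> * (2 * M)"
      using \<mu> M0 by (intro mult_right_mono) auto
    finally show ?thesis
      by (simp add: d_def mult_ac)
  qed
  ultimately show ?thesis by blast
qed

lemma convex_operator_lipschitz_on_cball:
  fixes F :: "'a::banach_lattice \<Rightarrow> 'a"
  assumes F: "convex_operator F" and \<rho>: "0 < \<rho>"
    and M: "\<And>z. z \<in> cball c \<rho> \<Longrightarrow> norm (F z) \<le> M"
  shows "(8 * M / \<rho>)-lipschitz_on (cball c (\<rho>/2)) F"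
proof (rule lipschitz_onI)
  have "0 \<le> M"
    using M[of c] \<rho> by (meson centre_in_cball less_imp_le norm_ge_zero order_trans)
  then show "0 \<le> 8 * M / \<rho>"
    using \<rho> by simp
  fix a b assume a: "a \<in> cball c (\<rho>/2)" and b: "b \<in> cball c (\<rho>/2)"
  obtain u where u: "F b - F a \<le> u" "norm u \<le> 4 * M / \<rho> * dist b a"
    using convex_operator_increment_upper_bound[OF F \<rho> M a b] by blast
  obtain u' where u': "F a - F b \<le> u'" "norm u' \<le> 4 * M / \<rho> * dist a b"
    using convex_operator_increment_upper_bound[OF F \<rho> M b a] by blast
  have "- u' \<le> F b - F a"
    using u'(1) by (metis minus_diff_eq neg_le_iff_le)
  then have "norm (F b - F a) \<le> norm (- u') + norm u"
    using u(1) by (rule norm_le_between)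
  also have "\<dots> \<le> 8 * M / \<rho> * dist a b"
    using u(2) u'(2) by (simp add: dist_commute)
  finally show "dist (F a) (F b) \<le> 8 * M / \<rho> * dist a b"
    by (simp add: dist_norm norm_minus_commute)
qed

lemma bounded_convex_operator_lipschitz_on_cball:
  fixes F :: "'a::banach_lattice \<Rightarrow> 'a"
  assumes "convex_operator F" "bounded_operator F"
  obtains L where "L-lipschitz_on (cball c R) F"
proof -
  define \<rho> where "\<rho> = 2 * (\<bar>R\<bar> + 1)"
  have \<rho>: "0 < \<rho>" by (simp add: \<rho>_def add_pos_nonneg)
  obtain M where M: "\<And>z. norm z \<le> norm c + \<rho> \<Longrightarrow> norm (F z) \<le> M"
    using assms(2) \<rho> unfolding bounded_operator_def
    by (meson add_nonneg_pos norm_ge_zero)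
  have "norm (F z) \<le> M" if "z \<in> cball c \<rho>" for z
    using that norm_triangle_ineq2[of z c] by (intro M) (simp add: dist_norm norm_minus_commute)
  then have "(8 * M / \<rho>)-lipschitz_on (cball c (\<rho>/2)) F"
    by (rule convex_operator_lipschitz_on_cball[OF assms(1) \<rho>])
  moreover have "cball c R \<subseteq> cball c (\<rho>/2)"
    by (simp add: \<rho>_def subset_cball)
  ultimately show ?thesis
    using that lipschitz_on_subset by blast
qed

lemma bounded_convex_operator_isCont:
  fixes F :: "'a::banach_lattice \<Rightarrow> 'a"
  assumes "convex_operator F" "bounded_operator F"
  shows "isCont F x"
proof -
  obtain L where "L-lipschitz_on (cball x 1) F"
    using bounded_convex_operator_lipschitz_on_cball[OF assms] .
  then have "continuous_on (ball x 1) F"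
    by (meson ball_subset_cball lipschitz_on_continuous_on lipschitz_on_subset)
  then show ?thesis
    by (simp add: continuous_on_eq_continuous_at)
qed

lemma convex_operator_difference_quotient_mono:
  fixes F :: "'a::banach_lattice \<Rightarrow> 'a"
  assumes F: "convex_operator F" and h: "0 < h" "h \<le> h'"
  shows "(1/h) *\<^sub>R (F (x + h *\<^sub>R v) - F x) \<le> (1/h') *\<^sub>R (F (x + h' *\<^sub>R v) - F x)"
proof -
  have "x + h *\<^sub>R v = (h/h') *\<^sub>R (x + h' *\<^sub>R v) + (1 - h/h') *\<^sub>R x"
    using h by (simp add: algebra_simps)
  then have "F (x + h *\<^sub>R v) - F x \<le> (h/h') *\<^sub>R (F (x + h' *\<^sub>R v) - F x)"
    using convex_operator_chord[OF F, of "h/h'"] h by simp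
  from scaleR_left_mono[OF this, of "1/h"] h show ?thesis
    by simp
qed

lemma convex_operator_difference_quotient_lower_bound:
  fixes F :: "'a::banach_lattice \<Rightarrow> 'a"
  assumes F: "convex_operator F" and h: "0 < h"
  shows "F x - F (x - v) \<le> (1/h) *\<^sub>R (F (x + h *\<^sub>R v) - F x)"
proof -
  have "(1/(1+h)) *\<^sub>R (x + h *\<^sub>R v) + (1 - 1/(1+h)) *\<^sub>R (x - v)
      = (1/(1+h)) *\<^sub>R ((x + h *\<^sub>R v) + h *\<^sub>R (x - v))"
    using h by (simp add: field_simps algebra_simps)
  also have "(x + h *\<^sub>R v) + h *\<^sub>R (x - v) = (1 + h) *\<^sub>R x"
    by (simp add: algebra_simps)
  finally have "x = (1/(1+h)) *\<^sub>R (x + h *\<^sub>R v) + (1 - 1/(1+h)) *\<^sub>R (x - v)"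
    using h by simp
  moreover have "0 \<le> 1/(1+h)" "1/(1+h) \<le> 1"
    using h by simp_all
  ultimately have "F x - F (x - v) \<le> (1/(1+h)) *\<^sub>R (F (x + h *\<^sub>R v) - F (x - v))"
    using convex_operator_chord[OF F] by metis
  from scaleR_left_mono[OF this, of "1+h"] h
  have "h *\<^sub>R (F x - F (x - v)) \<le> F (x + h *\<^sub>R v) - F x"
    by (simp add: algebra_simps)
  from scaleR_left_mono[OF this, of "1/h"] h show ?thesis
    by simp
qed

lemma lipschitz_on_difference_quotient_perturbation:
  fixes F :: "'a::real_normed_vector \<Rightarrow> 'b::real_normed_vector"
  assumes L: "L-lipschitz_on (cball x (norm v + 1)) F" and w: "(w \<longlongrightarrow> v) (at_right 0)"
  shows "((\<lambda>h. (1/h) *\<^sub>R (F (x + h *\<^sub>R w h) - F (x + h *\<^sub>R v))) \<longlongrightarrow> 0) (at_right 0)"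
proof (rule Lim_null_comparison)
  have "eventually (\<lambda>h. dist (w h) v < 1) (at_right 0)"
    using w by (rule tendstoD) simp
  moreover have "eventually (\<lambda>h. 0 < h \<and> h < 1) (at_right (0::real))"
    unfolding eventually_at_right_field by (intro exI[of _ 1]) simp
  ultimately show "eventually (\<lambda>h. norm ((1/h) *\<^sub>R (F (x + h *\<^sub>R w h) - F (x + h *\<^sub>R v)))
      \<le> L * norm (w h - v)) (at_right 0)"
  proof eventually_elim
    case (elim h)
    have "norm (w h) \<le> norm v + 1"
      using elim(1) norm_triangle_ineq2[of "w h" v] by (simp add: dist_norm)
    then have "x + h *\<^sub>R w h \<in> cball x (norm v + 1)" "x + h *\<^sub>R v \<in> cball x (norm v + 1)"
      using elim(2) mult_left_le_one_le[of "norm (w h)" h] mult_left_le_one_le[of "norm v" h]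
      by (auto simp: dist_norm)
    then have "norm (F (x + h *\<^sub>R w h) - F (x + h *\<^sub>R v))
        \<le> L * norm ((x + h *\<^sub>R w h) - (x + h *\<^sub>R v))"
      by (intro lipschitz_on_normD[OF L])
    also have "(x + h *\<^sub>R w h) - (x + h *\<^sub>R v) = h *\<^sub>R (w h - v)"
      by (simp add: algebra_simps)
    finally have "norm (F (x + h *\<^sub>R w h) - F (x + h *\<^sub>R v)) \<le> h * (L * norm (w h - v))"
      using elim(2) by (simp add: mult_ac)
    then show ?case
      using elim(2) by (simp add: pos_divide_le_eq mult.commute)
  qed
  show "((\<lambda>h. L * norm (w h - v)) \<longlongrightarrow> 0) (at_right 0)"
    by (intro tendsto_mult_right_zero tendsto_norm_zero LIM_zero w)
qed

section \<open>Uniform boundedness of convex operators\<close>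

text \<open>\<open>b\<close> is the midpoint of \<open>2 y - a\<close> and a point of \<open>ball a r\<close>, and \<open>y\<close> is the midpoint of
  \<open>b\<close> and \<open>2 y - b\<close>; convexity turns these into an upper and a lower bound for \<open>F b\<close>.\<close>

lemma convex_operator_norm_bound_transfer:
  fixes F :: "'a::banach_lattice \<Rightarrow> 'a"
  assumes F: "convex_operator F" and m: "\<And>z. z \<in> ball a r \<Longrightarrow> norm (F z) \<le> m"
    and b: "dist y b < r/2"
  shows "norm (F b) \<le> 2 * norm (F y) + norm (F (2 *\<^sub>R y - a)) + m"
proof -
  define p where "p = 2 *\<^sub>R y - a"
  have upper: "\<exists>u. F b' \<le> u \<and> norm u \<le> (norm (F p) + m) / 2" if b': "dist y b' < r/2" for b'
  proof -
    define z where "z = a + 2 *\<^sub>R (b' - y)"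
    have "dist a z = 2 * dist y b'"
      by (simp add: z_def dist_norm norm_minus_commute)
    then have z: "z \<in> ball a r"
      using b' by simp
    have "p + z = 2 *\<^sub>R b'"
      by (simp add: p_def z_def algebra_simps)
    then have "F b' \<le> (1/2) *\<^sub>R (F p + F z)"
      using convex_operator_midpoint[OF F, of p z] by simp
    moreover have "norm ((1/2) *\<^sub>R (F p + F z)) \<le> (norm (F p) + m) / 2"
      using m[OF z] norm_triangle_ineq[of "F p" "F z"] by simp
    ultimately show ?thesis by blast
  qed
  obtain u where u: "F b \<le> u" "norm u \<le> (norm (F p) + m) / 2"
    using upper[OF b] by blast
  obtain u' where u': "F (2 *\<^sub>R y - b) \<le> u'" "norm u' \<le> (norm (F p) + m) / 2"
  proof -
    have "y - (2 *\<^sub>R y - b) = - (y - b)"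
      by (simp add: scaleR_2)
    then have "dist y (2 *\<^sub>R y - b) = dist y b"
      by (simp only: dist_norm norm_minus_cancel)
    then show ?thesis
      using upper[of "2 *\<^sub>R y - b"] b that by auto
  qed
  have "F y \<le> (1/2) *\<^sub>R (F b + F (2 *\<^sub>R y - b))"
    using convex_operator_midpoint[OF F, of b "2 *\<^sub>R y - b"] by simp
  from scaleR_left_mono[OF this, of 2] have "2 *\<^sub>R F y \<le> F b + F (2 *\<^sub>R y - b)"
    by simp
  also have "\<dots> \<le> F b + u'"
    using u'(1) by (rule add_left_mono)
  finally have "2 *\<^sub>R F y - u' \<le> F b"
    by (simp add: diff_le_eq)
  then have "norm (F b) \<le> norm (2 *\<^sub>R F y - u') + norm u"
    using u(1) by (rule norm_le_between)
  also have "\<dots> \<le> 2 * norm (F y) + norm u' + norm u"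
    using norm_triangle_ineq4[of "2 *\<^sub>R F y" u'] by simp
  finally show ?thesis
    using u(2) u'(2) by (simp add: p_def)
qed

lemma closed_cover_interior_nonempty:
  fixes G :: "nat \<Rightarrow> 'a::complete_space set"
  assumes "\<And>n. closed (G n)" "\<Union>(range G) = UNIV"
  obtains n where "interior (G n) \<noteq> {}"
proof (rule ccontr)
  assume none: "\<not> thesis"
  have "euclidean interior_of \<Union>(range G) = {}"
  proof (rule Baire_category_alt)
    show "completely_metrizable_space (euclidean :: 'a topology) \<or>
        locally_compact_space (euclidean :: 'a topology) \<and> regular_space (euclidean :: 'a topology)"
      using completely_metrizable_space_euclidean by blast
    show "countable (range G)"
      by simp
    show "closedin euclidean T \<and> euclidean interior_of T = {}" if "T \<in> range G" for T
      using that assms(1) none \<open>\<And>n. interior (G n) \<noteq> {} \<Longrightarrow> thesis\<close>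
      by (auto simp: closed_closedin[symmetric])
  qed
  then show False
    using assms(2) by simp
qed

lemma convex_operators_uniform_boundedness:
  fixes F :: "'i \<Rightarrow> 'a::banach_lattice \<Rightarrow> 'a"
  assumes convex: "\<And>i. convex_operator (F i)" and cont: "\<And>i. continuous_on UNIV (F i)"
    and pointwise_bounded: "\<And>z. bounded (range (\<lambda>i. F i z))"
  obtains \<epsilon> M where "0 < \<epsilon>" "\<And>i b. b \<in> ball y \<epsilon> \<Longrightarrow> norm (F i b) \<le> M"
proof -
  have bound: "\<exists>K. \<forall>i. norm (F i z) \<le> K" for z
    using pointwise_bounded[of z] by (auto simp: bounded_iff)
  define G where "G m = {z. \<forall>i. norm (F i z) \<le> real m}" for m :: nat
  have "closed (G m)" for m
  proof -
    have "closed {z. norm (F i z) \<le> real m}" for i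
      by (intro closed_Collect_le continuous_on_norm cont continuous_on_const)
    moreover have "G m = (\<Inter>i. {z. norm (F i z) \<le> real m})"
      by (auto simp: G_def)
    ultimately show ?thesis
      by (simp add: closed_INT)
  qed
  moreover have "\<Union>(range G) = UNIV"
  proof -
    have "z \<in> G (nat \<lceil>K\<rceil>)" if "\<forall>i. norm (F i z) \<le> K" for z K
      using that by (simp add: G_def) (meson order_trans real_nat_ceiling_ge)
    then have "z \<in> \<Union>(range G)" for z
      using bound[of z] by blast
    then show ?thesis
      by blast
  qed
  ultimately obtain m where "interior (G m) \<noteq> {}"
    by (rule closed_cover_interior_nonempty)
  then obtain a r where r: "0 < r" "ball a r \<subseteq> G m"
    by (meson ex_in_conv mem_interior)
  obtain K1 where K1: "\<And>i. norm (F i y) \<le> K1"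
    using bound by blast
  obtain K2 where K2: "\<And>i. norm (F i (2 *\<^sub>R y - a)) \<le> K2"
    using bound by blast
  have "norm (F i b) \<le> 2 * K1 + K2 + real m" if "b \<in> ball y (r/2)" for i b
  proof -
    have "\<And>z. z \<in> ball a r \<Longrightarrow> norm (F i z) \<le> real m"
      using r(2) by (auto simp: G_def)
    then have "norm (F i b) \<le> 2 * norm (F i y) + norm (F i (2 *\<^sub>R y - a)) + real m"
      using that by (intro convex_operator_norm_bound_transfer[OF convex]) simp_all
    then show ?thesis
      using K1[of i] K2[of i] by linarith
  qed
  moreover have "0 < r/2"
    using r(1) by simp
  ultimately show ?thesis
    using that by blast
qed

section \<open>Order continuous norms\<close>

text \<open>The definition of order continuity indexes nets by sets of type \<open>'a set\<close>; a downward
  directed set \<open>W\<close> is encoded as the net of its singletons, ordered by reverse inclusion of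
  their elements.\<close>

lemma order_continuous_normD:
  fixes W :: "'a::banach_lattice set"
  assumes oc: "order_continuous_norm TYPE('a)" and "W \<noteq> {}"
    and directed: "\<And>u v. u \<in> W \<Longrightarrow> v \<in> W \<Longrightarrow> \<exists>w\<in>W. w \<le> u \<and> w \<le> v"
    and nonneg: "\<And>w. w \<in> W \<Longrightarrow> 0 \<le> w"
    and inf_zero: "\<And>z. (\<And>w. w \<in> W \<Longrightarrow> z \<le> w) \<Longrightarrow> z \<le> 0"
    and "0 < e"
  obtains w where "w \<in> W" "\<And>w'. w' \<in> W \<Longrightarrow> w' \<le> w \<Longrightarrow> norm w' < e"
proof -
  define I where "I = (\<lambda>w. {w}) ` W"
  define le where "le A B \<longleftrightarrow> the_elem B \<le> the_elem A" for A B :: "'a set"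
  have "net_decreasing_to_zero I le the_elem"
    unfolding net_decreasing_to_zero_def
  proof (intro conjI ballI allI impI)
    show "I \<noteq> {}"
      using \<open>W \<noteq> {}\<close> by (simp add: I_def)
    show "\<exists>C\<in>I. le A C \<and> le B C" if "A \<in> I" "B \<in> I" for A B
      using that directed by (fastforce simp: I_def le_def)
    show "z \<le> 0" if "\<forall>A\<in>I. z \<le> the_elem A" for z
      using that by (intro inf_zero) (auto simp: I_def)
  qed (use nonneg in \<open>auto simp: I_def le_def\<close>)
  then have "net_norm_to_zero I le the_elem"
    using oc by (simp add: order_continuous_norm_def)
  then obtain A where "A \<in> I" "\<forall>B\<in>I. le A B \<longrightarrow> norm (the_elem B) < e"
    using \<open>0 < e\<close> unfolding net_norm_to_zero_def by blast
  then show ?thesis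
    using that by (auto simp: I_def le_def)
qed

lemma lower_bound_gaps_Inf_zero:
  fixes q :: "'i \<Rightarrow> 'a::banach_lattice"
  assumes "i\<^sub>0 \<in> A" and c: "\<And>i. i \<in> A \<Longrightarrow> c \<le> q i"
    and z: "\<And>i y. i \<in> A \<Longrightarrow> (\<And>j. j \<in> A \<Longrightarrow> y \<le> q j) \<Longrightarrow> z \<le> q i - y"
  shows "z \<le> 0"
proof -
  have "c + real n *\<^sub>R z \<le> q i" if "i \<in> A" for n i
    using that
  proof (induction n arbitrary: i)
    case 0
    then show ?case by (simp add: c)
  next
    case (Suc n)
    have "z \<le> q i - (c + real n *\<^sub>R z)"
      using Suc by (intro z) auto
    then show ?case
      by (simp add: algebra_simps le_diff_eq)
  qed
  then have "real n *\<^sub>R z \<le> q i\<^sub>0 - c" for n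
    using \<open>i\<^sub>0 \<in> A\<close> by (simp add: le_diff_eq add.commute)
  then show ?thesis
    by (rule banach_lattice_Archimedean)
qed

text \<open>The gaps \<open>q h - y\<close> between values of \<open>q\<close> and lower bounds \<open>y\<close> of \<open>q\<close> form a downward
  directed set with infimum \<open>0\<close>, so order continuity makes \<open>q\<close> Cauchy at \<open>0+\<close>.\<close>

lemma order_continuous_norm_monotone_Cauchy:
  fixes q :: "real \<Rightarrow> 'a::banach_lattice"
  assumes oc: "order_continuous_norm TYPE('a)" and mono: "mono_on {0<..1} q"
    and lower: "\<And>h. h \<in> {0<..1} \<Longrightarrow> c \<le> q h" and "0 < e"
  obtains h\<^sub>0 y\<^sub>0 where "0 < h\<^sub>0" "\<And>h. h \<in> {0<..h\<^sub>0} \<Longrightarrow> norm (q h - y\<^sub>0) < e"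
proof -
  define L where "L = {y. \<forall>h\<in>{0<..1}. y \<le> q h}"
  define W where "W = {q h - y | h y. h \<in> {0<..1} \<and> y \<in> L}"
  have memW: "q h - y \<in> W" if "h \<in> {0<..1}" "y \<in> L" for h y
    unfolding W_def using that by blast
  have "W \<noteq> {}"
    using memW[of 1 c] lower by (auto simp: L_def)
  moreover have "\<exists>w\<in>W. w \<le> u \<and> w \<le> v" if uv: "u \<in> W" "v \<in> W" for u v
  proof -
    obtain h1 y1 h2 y2 where "h1 \<in> {0<..1}" "y1 \<in> L" "u = q h1 - y1"
      "h2 \<in> {0<..1}" "y2 \<in> L" "v = q h2 - y2"
      using uv by (auto simp: W_def)
    moreover have "q (min h1 h2) - sup y1 y2 \<in> W"
      using calculation by (intro memW) (auto simp: L_def)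
    moreover have "q (min h1 h2) - sup y1 y2 \<le> u" "q (min h1 h2) - sup y1 y2 \<le> v"
      using calculation mono_onD[OF mono, of "min h1 h2" h1] mono_onD[OF mono, of "min h1 h2" h2]
      by (auto intro!: diff_mono)
    ultimately show ?thesis
      by blast
  qed
  moreover have "0 \<le> w" if "w \<in> W" for w
    using that by (auto simp: W_def L_def)
  moreover have "z \<le> 0" if "\<And>w. w \<in> W \<Longrightarrow> z \<le> w" for z
    using lower by (intro lower_bound_gaps_Inf_zero[where A = "{0<..1}" and q = q and i\<^sub>0 = 1])
      (auto simp: L_def intro!: that memW)
  ultimately obtain w where w: "w \<in> W" "\<And>w'. w' \<in> W \<Longrightarrow> w' \<le> w \<Longrightarrow> norm w' < e"
    using order_continuous_normD[OF oc] \<open>0 < e\<close> by metis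
  then obtain h\<^sub>0 y\<^sub>0 where h\<^sub>0: "h\<^sub>0 \<in> {0<..1}" "y\<^sub>0 \<in> L" "w = q h\<^sub>0 - y\<^sub>0"
    by (auto simp: W_def)
  have "norm (q h - y\<^sub>0) < e" if "h \<in> {0<..h\<^sub>0}" for h
    using that h\<^sub>0 mono_onD[OF mono, of h h\<^sub>0] by (intro w(2) memW) auto
  with h\<^sub>0(1) show ?thesis
    by (intro that[of h\<^sub>0 y\<^sub>0]) auto
qed

lemma order_continuous_norm_monotone_limit:
  fixes q :: "real \<Rightarrow> 'a::banach_lattice"
  assumes oc: "order_continuous_norm TYPE('a)" and mono: "mono_on {0<..1} q"
    and lower: "\<And>h. h \<in> {0<..1} \<Longrightarrow> c \<le> q h"
  shows "\<exists>l. (q \<longlongrightarrow> l) (at_right 0)"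
proof -
  have "\<exists>P. eventually P (at_right 0) \<and> (\<forall>h h'. P h \<and> P h' \<longrightarrow> dist (q h) (q h') < e)"
    if "0 < e" for e
  proof -
    obtain h\<^sub>0 y\<^sub>0 where "0 < h\<^sub>0" and close: "\<And>h. h \<in> {0<..h\<^sub>0} \<Longrightarrow> norm (q h - y\<^sub>0) < e/2"
      using order_continuous_norm_monotone_Cauchy[OF oc mono lower, of "e/2"] \<open>0 < e\<close> by auto
    have "dist (q h) (q h') < e" if "h \<in> {0<..h\<^sub>0}" "h' \<in> {0<..h\<^sub>0}" for h h'
      using close[OF that(1)] close[OF that(2)] norm_triangle_ineq4[of "q h - y\<^sub>0" "q h' - y\<^sub>0"]
      by (simp add: dist_norm)
    moreover have "eventually (\<lambda>h. h \<in> {0<..h\<^sub>0}) (at_right 0)"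
      unfolding eventually_at_right_field using \<open>0 < h\<^sub>0\<close> by (intro exI[of _ h\<^sub>0]) simp
    ultimately show ?thesis
      by blast
  qed
  then have "cauchy_filter (filtermap q (at_right 0))"
    by (simp add: cauchy_filter_metric_filtermap)
  moreover have "filtermap q (at_right 0) \<noteq> bot"
    by (simp add: filtermap_bot_iff)
  ultimately obtain l where "filtermap q (at_right 0) \<le> nhds l"
    using cauchy_filter_complete_converges[OF _ complete_UNIV] by auto
  then show ?thesis
    by (auto simp: filterlim_def)
qed

lemma convex_operator_directional_limit:
  fixes F :: "'a::banach_lattice \<Rightarrow> 'a"
  assumes oc: "order_continuous_norm TYPE('a)"
    and F: "convex_operator F" "bounded_operator F"
    and w: "(w \<longlongrightarrow> v) (at_right 0)"
  shows "\<exists>l. ((\<lambda>h. (1/h) *\<^sub>R (F (x + h *\<^sub>R w h) - F x)) \<longlongrightarrow> l) (at_right 0)"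
proof -
  define q where "q h = (1/h) *\<^sub>R (F (x + h *\<^sub>R v) - F x)" for h
  have "mono_on {0<..1} q"
    by (auto simp: mono_on_def q_def intro: convex_operator_difference_quotient_mono[OF F(1)])
  moreover have "F x - F (x - v) \<le> q h" if "h \<in> {0<..1}" for h
    using that convex_operator_difference_quotient_lower_bound[OF F(1)] by (simp add: q_def)
  ultimately obtain l where l: "(q \<longlongrightarrow> l) (at_right 0)"
    using order_continuous_norm_monotone_limit[OF oc] by blast
  obtain L where "L-lipschitz_on (cball x (norm v + 1)) F"
    using bounded_convex_operator_lipschitz_on_cball[OF F] .
  from tendsto_add[OF lipschitz_on_difference_quotient_perturbation[OF this w] l] show ?thesis
    by (auto simp: q_def algebra_simps)
qed

section \<open>Right derivatives\<close>

lemma real_interval_induct: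
  fixes P :: "real \<Rightarrow> bool"
  assumes "a \<le> b" "P a"
    and left: "\<And>s. s \<in> {a<..b} \<Longrightarrow> (\<And>r. r \<in> {a..<s} \<Longrightarrow> P r) \<Longrightarrow> P s"
    and right: "\<And>s. s \<in> {a..<b} \<Longrightarrow> P s \<Longrightarrow> eventually (\<lambda>h. P (s + h)) (at_right 0)"
  shows "P b"
proof -
  define K where "K = {s \<in> {a..b}. \<forall>r\<in>{a..s}. P r}"
  define \<sigma> where "\<sigma> = Sup K"
  have "a \<in> K"
    using assms(1,2) by (simp add: K_def)
  moreover have bdd: "bdd_above K"
    by (auto simp: K_def bdd_above_def)
  ultimately have "a \<le> \<sigma>"
    unfolding \<sigma>_def by (rule cSup_upper)
  moreover have "\<sigma> \<le> b"
    unfolding \<sigma>_def using \<open>a \<in> K\<close> by (intro cSup_least) (auto simp: K_def)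
  ultimately have \<sigma>: "\<sigma> \<in> {a..b}"
    by simp
  have below: "P r" if r: "r \<in> {a..<\<sigma>}" for r
  proof -
    obtain s where "s \<in> K" "r < s"
      using less_cSupD[of K r] \<open>a \<in> K\<close> r by (auto simp: \<sigma>_def)
    then show ?thesis
      using r by (auto simp: K_def)
  qed
  have P\<sigma>: "P \<sigma>"
    using \<open>P a\<close> \<sigma> below by (cases "\<sigma> = a") (auto intro: left)
  have "\<sigma> = b"
  proof (rule ccontr)
    assume "\<sigma> \<noteq> b"
    with \<sigma> obtain c where c: "0 < c" "\<And>h. 0 < h \<Longrightarrow> h < c \<Longrightarrow> P (\<sigma> + h)"
      using right[of \<sigma>] P\<sigma> by (auto simp: eventually_at_right_field)
    define h where "h = min (c/2) (b - \<sigma>)"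
    have h: "0 < h" "h < c" "\<sigma> + h \<le> b"
      using c \<sigma> \<open>\<sigma> \<noteq> b\<close> by (auto simp: h_def)
    have "P r" if "r \<in> {a..\<sigma> + h}" for r
      using below[of r] P\<sigma> c(2)[of "r - \<sigma>"] that h by (cases r \<sigma> rule: linorder_cases) auto
    then have "\<sigma> + h \<in> K"
      using \<sigma> h by (simp add: K_def)
    then have "\<sigma> + h \<le> \<sigma>"
      unfolding \<sigma>_def using bdd by (rule cSup_upper)
    then show False
      using h by simp
  qed
  then show ?thesis
    using P\<sigma> by simp
qed

lemma norm_diff_le_of_right_increments:
  fixes f :: "real \<Rightarrow> 'b::real_normed_vector"
  assumes "a \<le> b"
    and left: "\<And>s. s \<in> {a<..b} \<Longrightarrow> ((\<lambda>h. f (s - h)) \<longlongrightarrow> f s) (at_right 0)"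
    and right: "\<And>s. s \<in> {a..<b} \<Longrightarrow> eventually (\<lambda>h. norm (f (s + h) - f s) \<le> \<epsilon> * h) (at_right 0)"
  shows "norm (f b - f a) \<le> \<epsilon> * (b - a)"
proof (rule real_interval_induct[OF \<open>a \<le> b\<close>, where P = "\<lambda>r. norm (f r - f a) \<le> \<epsilon> * (r - a)"])
  fix s assume s: "s \<in> {a<..b}" and below: "\<And>r. r \<in> {a..<s} \<Longrightarrow> norm (f r - f a) \<le> \<epsilon> * (r - a)"
  have "eventually (\<lambda>h. norm (f (s - h) - f a) \<le> \<epsilon> * (s - h - a)) (at_right 0)"
    unfolding eventually_at_right_field using s below by (intro exI[of _ "s - a"]) simp
  moreover have "((\<lambda>h. norm (f (s - h) - f a)) \<longlongrightarrow> norm (f s - f a)) (at_right 0)"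
    using left[OF s] by (intro tendsto_intros)
  moreover have "((\<lambda>h. \<epsilon> * (s - h - a)) \<longlongrightarrow> \<epsilon> * (s - 0 - a)) (at_right 0)"
    by (intro tendsto_intros)
  ultimately show "norm (f s - f a) \<le> \<epsilon> * (s - a)"
    using tendsto_le[OF trivial_limit_at_right_real] by fastforce
next
  fix s assume s: "s \<in> {a..<b}" and "norm (f s - f a) \<le> \<epsilon> * (s - a)"
  with right[OF s] show "eventually (\<lambda>h. norm (f (s + h) - f a) \<le> \<epsilon> * (s + h - a)) (at_right 0)"
  proof (elim eventually_mono)
    fix h assume "norm (f (s + h) - f s) \<le> \<epsilon> * h"
    with \<open>norm (f s - f a) \<le> \<epsilon> * (s - a)\<close> show "norm (f (s + h) - f a) \<le> \<epsilon> * (s + h - a)"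
      using norm_triangle_ineq[of "f (s + h) - f s" "f s - f a"] by (simp add: algebra_simps)
  qed
qed simp

lemma eq_of_right_derivative_zero:
  fixes f :: "real \<Rightarrow> 'b::real_normed_vector"
  assumes "a \<le> b"
    and left: "\<And>s. s \<in> {a<..b} \<Longrightarrow> ((\<lambda>h. f (s - h)) \<longlongrightarrow> f s) (at_right 0)"
    and right: "\<And>s. s \<in> {a..<b} \<Longrightarrow> ((\<lambda>h. (1/h) *\<^sub>R (f (s + h) - f s)) \<longlongrightarrow> 0) (at_right 0)"
  shows "f b = f a"
proof -
  have "norm (f b - f a) \<le> \<epsilon> * (b - a)" if "0 < \<epsilon>" for \<epsilon>
  proof (rule norm_diff_le_of_right_increments[OF \<open>a \<le> b\<close> left])
    fix s assume "s \<in> {a..<b}"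
    then have "eventually (\<lambda>h. norm ((1/h) *\<^sub>R (f (s + h) - f s)) < \<epsilon>) (at_right 0)"
      using right[of s] \<open>0 < \<epsilon>\<close> by (auto dest: tendstoD simp: dist_norm)
    moreover have "eventually (\<lambda>h. 0 < h) (at_right (0::real))"
      by (rule eventually_at_right_less)
    ultimately show "eventually (\<lambda>h. norm (f (s + h) - f s) \<le> \<epsilon> * h) (at_right 0)"
    proof eventually_elim
      case (elim h)
      then have "norm (f (s + h) - f s) / h < \<epsilon>"
        by simp
      then show ?case
        using \<open>0 < h\<close> by (simp add: pos_divide_less_eq)
    qed
  qed auto
  moreover have "((\<lambda>\<epsilon>. \<epsilon> * (b - a)) \<longlongrightarrow> 0 * (b - a)) (at_right 0)"
    by (intro tendsto_intros)
  ultimately have "norm (f b - f a) \<le> 0"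
    by (intro tendsto_le[OF trivial_limit_at_right_real _ tendsto_const])
      (auto simp: eventually_at_right_field intro!: exI[of _ 1])
  then show ?thesis
    by simp
qed

section \<open>Convex C0-semigroups\<close>

lemma tendsto_generator:
  assumes "x \<in> generator_domain S"
  shows "((\<lambda>h. (1/h) *\<^sub>R (S h x - x)) \<longlongrightarrow> generator S x) (at_right 0)"
  using assms tendsto_Lim[OF trivial_limit_at_right_real]
  by (auto simp: generator_domain_def generator_def)

lemma
  assumes "convex_C0_semigroup S"
  shows convex_C0_semigroup_convex: "0 \<le> t \<Longrightarrow> convex_operator (S t)"
    and convex_C0_semigroup_bounded: "0 \<le> t \<Longrightarrow> bounded_operator (S t)"
    and convex_C0_semigroup_zero: "S 0 x = x"
    and convex_C0_semigroup_add: "0 \<le> s \<Longrightarrow> 0 \<le> t \<Longrightarrow> S (t + s) x = S t (S s x)"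
    and convex_C0_semigroup_strongly_continuous: "((\<lambda>t. S t x) \<longlongrightarrow> x) (at_right 0)"
  using assms unfolding convex_C0_semigroup_def by (auto simp: fun_eq_iff)

lemma convex_C0_semigroup_isCont:
  assumes "convex_C0_semigroup S" "0 \<le> t"
  shows "isCont (S t) x"
  using assms by (intro bounded_convex_operator_isCont convex_C0_semigroup_convex
      convex_C0_semigroup_bounded)

lemma convex_C0_semigroup_orbit_continuous_at_0:
  assumes "convex_C0_semigroup S"
  shows "continuous (at 0 within {0..}) (\<lambda>r. S r x)"
  using convex_C0_semigroup_strongly_continuous[OF assms, of x]
  by (simp add: continuous_within at_within_Ici_at_right convex_C0_semigroup_zero[OF assms])

text \<open>Otherwise there are \<open>r\<^sub>n \<rightarrow> 0\<close> and \<open>a\<^sub>n \<rightarrow> y\<close> with \<open>norm (S r\<^sub>n a\<^sub>n) > n\<close>, although the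
  family \<open>S r\<^sub>n\<close> is pointwise convergent and hence uniformly bounded near \<open>y\<close>.\<close>

lemma convex_C0_semigroup_locally_bounded:
  assumes S: "convex_C0_semigroup S"
  obtains \<delta> \<epsilon> M where "0 < \<delta>" "0 < \<epsilon>" "\<And>r a. r \<in> {0..\<delta>} \<Longrightarrow> a \<in> cball y \<epsilon> \<Longrightarrow> norm (S r a) \<le> M"
proof (rule ccontr)
  assume none: "\<not> thesis"
  have "\<exists>r a. r \<in> {0..inverse (real (Suc n))} \<and> a \<in> cball y (inverse (real (Suc n))) \<and>
      real n < norm (S r a)" for n
    using none that[of "inverse (real (Suc n))" "inverse (real (Suc n))" "real n"]
    by (force simp: not_le)
  then obtain \<rho> a where \<rho>: "\<And>n. \<rho> n \<in> {0..inverse (real (Suc n))}"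
    and a: "\<And>n. a n \<in> cball y (inverse (real (Suc n)))"
    and large: "\<And>n. real n < norm (S (\<rho> n) (a n))"
    by metis
  have "\<rho> \<longlonglongrightarrow> 0"
    using \<rho> by (intro tendsto_sandwich[OF _ _ tendsto_const LIMSEQ_inverse_real_of_nat]) auto
  then have orbit: "(\<lambda>n. S (\<rho> n) z) \<longlonglongrightarrow> z" for z
    using continuous_within_tendsto_compose'[OF convex_C0_semigroup_orbit_continuous_at_0[OF S], of \<rho>]
      \<rho> by (simp add: convex_C0_semigroup_zero[OF S])
  have "convex_operator (S (\<rho> n))" "continuous_on UNIV (S (\<rho> n))" for n
    using \<rho>[of n] by (auto intro!: continuous_at_imp_continuous_on convex_C0_semigroup_convex[OF S]
        convex_C0_semigroup_isCont[OF S])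
  moreover have "bounded (range (\<lambda>n. S (\<rho> n) z))" for z
    using orbit by (rule convergent_imp_bounded)
  ultimately obtain \<epsilon> M where \<epsilon>: "0 < \<epsilon>" and M: "\<And>n b. b \<in> ball y \<epsilon> \<Longrightarrow> norm (S (\<rho> n) b) \<le> M"
    by (rule convex_operators_uniform_boundedness[where y = y]) blast
  obtain n :: nat where n: "max M (1/\<epsilon>) < real n"
    using reals_Archimedean2 by blast
  then have "inverse (real (Suc n)) < \<epsilon>"
    using \<epsilon> by (simp add: field_simps)
  then have "a n \<in> ball y \<epsilon>"
    using a[of n] by simp
  then show False
    using M[of "a n" n] large[of n] n by simp
qed

text \<open>For \<open>r\<close> near \<open>r\<^sub>0\<close>, \<open>S r = S c \<circ> S (r - c)\<close> with a fixed \<open>c\<close> and \<open>r - c\<close> small: the first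
  factor is Lipschitz on bounded sets, the second on a ball around \<open>y\<close>, where it is bounded.\<close>

lemma convex_C0_semigroup_uniformly_lipschitz:
  assumes S: "convex_C0_semigroup S" and "0 \<le> r\<^sub>0"
  obtains \<delta> \<epsilon> L where "0 < \<delta>" "0 < \<epsilon>"
    "\<And>r. 0 \<le> r \<Longrightarrow> \<bar>r - r\<^sub>0\<bar> \<le> \<delta> \<Longrightarrow> L-lipschitz_on (cball y \<epsilon>) (S r)"
proof -
  obtain \<delta> \<epsilon> M where \<delta>: "0 < \<delta>" and \<epsilon>: "0 < \<epsilon>"
    and M: "\<And>r a. r \<in> {0..\<delta>} \<Longrightarrow> a \<in> cball y \<epsilon> \<Longrightarrow> norm (S r a) \<le> M"
    using convex_C0_semigroup_locally_bounded[OF S] by blast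
  define c where "c = max 0 (r\<^sub>0 - \<delta>/2)"
  have "0 \<le> c"
    by (simp add: c_def)
  then obtain L where L: "L-lipschitz_on (cball 0 M) (S c)"
    using bounded_convex_operator_lipschitz_on_cball convex_C0_semigroup_convex[OF S]
      convex_C0_semigroup_bounded[OF S] by blast
  have "(L * (8 * M / \<epsilon>))-lipschitz_on (cball y (\<epsilon>/2)) (S r)"
    if r: "0 \<le> r" "\<bar>r - r\<^sub>0\<bar> \<le> \<delta>/2" for r
  proof -
    have rc: "r - c \<in> {0..\<delta>}"
      using r abs_le_iff[of "r - r\<^sub>0" "\<delta>/2"] by (auto simp: c_def max_def)
    have "S r = (\<lambda>a. S c (S (r - c) a))"
      using convex_C0_semigroup_add[OF S, of "r - c" c] rc by (auto simp: c_def fun_eq_iff)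
    moreover have "(8 * M / \<epsilon>)-lipschitz_on (cball y (\<epsilon>/2)) (S (r - c))"
      using rc by (intro convex_operator_lipschitz_on_cball convex_C0_semigroup_convex[OF S] \<epsilon> M) auto
    moreover have "S (r - c) ` cball y (\<epsilon>/2) \<subseteq> cball 0 M"
      using M[OF rc] \<epsilon> by auto
    then have "L-lipschitz_on (S (r - c) ` cball y (\<epsilon>/2)) (S c)"
      by (rule lipschitz_on_subset[OF L])
    ultimately show ?thesis
      using lipschitz_on_compose2 by metis
  qed
  with \<delta> \<epsilon> show ?thesis
    by (intro that[of "\<delta>/2" "\<epsilon>/2"]) auto
qed

lemma convex_C0_semigroup_tendsto_at_0:
  assumes S: "convex_C0_semigroup S" and a: "(a \<longlongrightarrow> y) (at_right 0)"
  shows "((\<lambda>h. S h (a h)) \<longlongrightarrow> y) (at_right 0)"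
proof -
  obtain \<delta> \<epsilon> L where "0 < \<delta>" "0 < \<epsilon>"
    and L: "\<And>r. 0 \<le> r \<Longrightarrow> \<bar>r - 0\<bar> \<le> \<delta> \<Longrightarrow> L-lipschitz_on (cball y \<epsilon>) (S r)"
    using convex_C0_semigroup_uniformly_lipschitz[OF S order_refl, where y = y] by blast
  have "eventually (\<lambda>h. dist (a h) y < \<epsilon>) (at_right 0)"
    using a \<open>0 < \<epsilon>\<close> by (rule tendstoD)
  moreover have "eventually (\<lambda>h. 0 < h \<and> h < \<delta>) (at_right (0::real))"
    unfolding eventually_at_right_field using \<open>0 < \<delta>\<close> by blast
  ultimately have "eventually (\<lambda>h. norm (S h (a h) - y) \<le> L * norm (a h - y) + norm (S h y - y))
      (at_right 0)"
  proof eventually_elim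
    case (elim h)
    then have "norm (S h (a h) - S h y) \<le> L * norm (a h - y)"
      using \<open>0 < \<epsilon>\<close> by (intro lipschitz_on_normD[OF L]) (auto simp: dist_commute)
    then show ?case
      using norm_triangle_ineq[of "S h (a h) - S h y" "S h y - y"] by simp
  qed
  moreover have "((\<lambda>h. L * norm (a h - y) + norm (S h y - y)) \<longlongrightarrow> 0) (at_right 0)"
    using a convex_C0_semigroup_strongly_continuous[OF S, of y]
    by (intro tendsto_add_zero tendsto_mult_right_zero tendsto_norm_zero) (simp_all add: LIM_zero_iff)
  ultimately have "((\<lambda>h. S h (a h) - y) \<longlongrightarrow> 0) (at_right 0)"
    by (rule Lim_null_comparison)
  then show ?thesis
    by (simp add: LIM_zero_iff)
qed

lemma convex_C0_semigroup_orbit_left_continuous: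
  assumes S: "convex_C0_semigroup S" and "0 < s"
  shows "((\<lambda>h. S (s - h) x) \<longlongrightarrow> S s x) (at_right 0)"
proof -
  obtain \<delta> \<epsilon> L where "0 < \<delta>" "0 < \<epsilon>"
    and L: "\<And>r. 0 \<le> r \<Longrightarrow> \<bar>r - s\<bar> \<le> \<delta> \<Longrightarrow> L-lipschitz_on (cball x \<epsilon>) (S r)"
    using convex_C0_semigroup_uniformly_lipschitz[OF S, where r\<^sub>0 = s and y = x] \<open>0 < s\<close> by auto
  have "eventually (\<lambda>h. dist (S h x) x < \<epsilon>) (at_right 0)"
    using convex_C0_semigroup_strongly_continuous[OF S] \<open>0 < \<epsilon>\<close> by (rule tendstoD)
  moreover have "eventually (\<lambda>h. 0 < h \<and> h < min \<delta> s) (at_right (0::real))"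
    unfolding eventually_at_right_field using \<open>0 < \<delta>\<close> \<open>0 < s\<close> by (intro exI[of _ "min \<delta> s"]) simp
  ultimately have "eventually (\<lambda>h. norm (S (s - h) x - S s x) \<le> L * norm (S h x - x)) (at_right 0)"
  proof eventually_elim
    case (elim h)
    then have "S s x = S (s - h) (S h x)"
      using convex_C0_semigroup_add[OF S, of h "s - h" x] by simp
    moreover have "norm (S (s - h) x - S (s - h) (S h x)) \<le> L * norm (x - S h x)"
      using elim \<open>0 < \<epsilon>\<close> by (intro lipschitz_on_normD[OF L]) (auto simp: dist_commute)
    ultimately show ?case
      by (simp add: norm_minus_commute)
  qed
  moreover have "((\<lambda>h. L * norm (S h x - x)) \<longlongrightarrow> 0) (at_right 0)"
    using convex_C0_semigroup_strongly_continuous[OF S, of x]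
    by (intro tendsto_mult_right_zero tendsto_norm_zero) (simp add: LIM_zero_iff)
  ultimately have "((\<lambda>h. S (s - h) x - S s x) \<longlongrightarrow> 0) (at_right 0)"
    by (rule Lim_null_comparison)
  then show ?thesis
    by (simp add: LIM_zero_iff)
qed

lemma convex_C0_semigroup_backward_difference_quotient:
  assumes S: "convex_C0_semigroup S" and "0 < r"
    and b: "((\<lambda>h. (1/h) *\<^sub>R (b h - S h y)) \<longlongrightarrow> 0) (at_right 0)"
  shows "((\<lambda>h. (1/h) *\<^sub>R (S (r - h) (b h) - S r y)) \<longlongrightarrow> 0) (at_right 0)"
proof -
  obtain \<delta> \<epsilon> L where "0 < \<delta>" "0 < \<epsilon>"
    and L: "\<And>r'. 0 \<le> r' \<Longrightarrow> \<bar>r' - r\<bar> \<le> \<delta> \<Longrightarrow> L-lipschitz_on (cball y \<epsilon>) (S r')"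
    using convex_C0_semigroup_uniformly_lipschitz[OF S, where r\<^sub>0 = r and y = y] \<open>0 < r\<close> by auto
  have pos: "eventually (\<lambda>h. 0 < h \<and> h < min \<delta> r) (at_right (0::real))"
    unfolding eventually_at_right_field using \<open>0 < \<delta>\<close> \<open>0 < r\<close> by (intro exI[of _ "min \<delta> r"]) simp
  have "((\<lambda>h. h *\<^sub>R ((1/h) *\<^sub>R (b h - S h y))) \<longlongrightarrow> 0 *\<^sub>R 0) (at_right 0)"
    by (intro tendsto_scaleR b tendsto_ident_at)
  moreover have "eventually (\<lambda>h. h *\<^sub>R ((1/h) *\<^sub>R (b h - S h y)) = b h - S h y) (at_right 0)"
    using pos by eventually_elim simp
  ultimately have "((\<lambda>h. (b h - S h y) + S h y) \<longlongrightarrow> 0 + y) (at_right 0)"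
    using convex_C0_semigroup_strongly_continuous[OF S]
    by (intro tendsto_add) (auto intro: Lim_transform_eventually)
  then have "(b \<longlongrightarrow> y) (at_right 0)"
    by simp
  then have "eventually (\<lambda>h. dist (b h) y < \<epsilon>) (at_right 0)"
    using \<open>0 < \<epsilon>\<close> by (rule tendstoD)
  moreover have "eventually (\<lambda>h. dist (S h y) y < \<epsilon>) (at_right 0)"
    using convex_C0_semigroup_strongly_continuous[OF S] \<open>0 < \<epsilon>\<close> by (rule tendstoD)
  ultimately have "eventually (\<lambda>h. norm ((1/h) *\<^sub>R (S (r - h) (b h) - S r y))
      \<le> L * norm ((1/h) *\<^sub>R (b h - S h y))) (at_right 0)"
    using pos
  proof eventually_elim
    case (elim h)
    then have "S r y = S (r - h) (S h y)"
      using convex_C0_semigroup_add[OF S, of h "r - h" y] by simp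
    moreover have "norm (S (r - h) (b h) - S (r - h) (S h y)) \<le> L * norm (b h - S h y)"
      using elim \<open>0 < \<epsilon>\<close> by (intro lipschitz_on_normD[OF L]) (auto simp: dist_commute)
    ultimately show ?case
      using elim by (simp add: divide_right_mono)
  qed
  moreover have "((\<lambda>h. L * norm ((1/h) *\<^sub>R (b h - S h y))) \<longlongrightarrow> 0) (at_right 0)"
    by (intro tendsto_mult_right_zero tendsto_norm_zero b)
  ultimately show ?thesis
    by (rule Lim_null_comparison)
qed

lemma generator_domain_invariant:
  fixes T :: "real \<Rightarrow> 'a::banach_lattice \<Rightarrow> 'a"
  assumes oc: "order_continuous_norm TYPE('a)" and T: "convex_C0_semigroup T"
    and x: "x \<in> generator_domain T" and s: "0 \<le> s"
  shows "T s x \<in> generator_domain T"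
proof -
  define v where "v h = (1/h) *\<^sub>R (T h x - x)" for h
  have "(v \<longlongrightarrow> generator T x) (at_right 0)"
    unfolding v_def by (rule tendsto_generator[OF x])
  then obtain l where l: "((\<lambda>h. (1/h) *\<^sub>R (T s (x + h *\<^sub>R v h) - T s x)) \<longlongrightarrow> l) (at_right 0)"
    using convex_operator_directional_limit[OF oc convex_C0_semigroup_convex[OF T s]
        convex_C0_semigroup_bounded[OF T s]] by blast
  have "eventually (\<lambda>h. (1/h) *\<^sub>R (T s (x + h *\<^sub>R v h) - T s x)
      = (1/h) *\<^sub>R (T h (T s x) - T s x)) (at_right 0)"
    using eventually_at_right_less
  proof eventually_elim
    case (elim h)
    then have "T s (x + h *\<^sub>R v h) = T s (T h x)"
      by (simp add: v_def)
    also have "\<dots> = T (s + h) x"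
      using convex_C0_semigroup_add[OF T, where t = s and s = h] elim s by simp
    also have "\<dots> = T h (T s x)"
      using convex_C0_semigroup_add[OF T, where t = h and s = s] elim s by (simp add: add.commute)
    finally show ?case
      by simp
  qed
  from Lim_transform_eventually[OF l this] show ?thesis
    unfolding generator_domain_def by blast
qed

lemma generator_extension_difference_quotient:
  assumes "generator_domain T \<subseteq> generator_domain S"
    and "\<forall>x\<in>generator_domain T. generator S x = generator T x" and "y \<in> generator_domain T"
  shows "((\<lambda>h. (1/h) *\<^sub>R (T h y - S h y)) \<longlongrightarrow> 0) (at_right 0)"
proof -
  have "((\<lambda>h. (1/h) *\<^sub>R (T h y - y) - (1/h) *\<^sub>R (S h y - y)) \<longlongrightarrow> generator T y - generator S y)
      (at_right 0)"
    using assms by (intro tendsto_diff tendsto_generator) auto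
  moreover have "(\<lambda>h. (1/h) *\<^sub>R (T h y - y) - (1/h) *\<^sub>R (S h y - y)) = (\<lambda>h. (1/h) *\<^sub>R (T h y - S h y))"
    by (simp add: fun_eq_iff algebra_simps)
  ultimately show ?thesis
    using assms by simp
qed

lemma convex_C0_semigroups_path_left_continuous:
  assumes S: "convex_C0_semigroup S" and T: "convex_C0_semigroup T" and s: "0 < s" "s \<le> t"
  shows "((\<lambda>h. S (t - (s - h)) (T (s - h) x)) \<longlongrightarrow> S (t - s) (T s x)) (at_right 0)"
proof -
  have "((\<lambda>h. T (s - h) x) \<longlongrightarrow> T s x) (at_right 0)"
    using s by (intro convex_C0_semigroup_orbit_left_continuous[OF T])
  then have "((\<lambda>h. S h (T (s - h) x)) \<longlongrightarrow> T s x) (at_right 0)"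
    by (rule convex_C0_semigroup_tendsto_at_0[OF S])
  then have "((\<lambda>h. S (t - s) (S h (T (s - h) x))) \<longlongrightarrow> S (t - s) (T s x)) (at_right 0)"
    using s by (intro isCont_tendsto_compose[OF convex_C0_semigroup_isCont[OF S]]) auto
  moreover have "eventually (\<lambda>h. S (t - s) (S h (T (s - h) x)) = S (t - (s - h)) (T (s - h) x))
      (at_right 0)"
    using eventually_at_right_less
  proof eventually_elim
    case (elim h)
    then show ?case
      using convex_C0_semigroup_add[OF S, where t = "t - s" and s = h] s by (simp add: algebra_simps)
  qed
  ultimately show ?thesis
    by (rule Lim_transform_eventually)
qed

lemma convex_C0_semigroups_path_right_derivative:
  fixes S T :: "real \<Rightarrow> 'a::banach_lattice \<Rightarrow> 'a"
  assumes oc: "order_continuous_norm TYPE('a)"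
    and S: "convex_C0_semigroup S" and T: "convex_C0_semigroup T"
    and sub: "generator_domain T \<subseteq> generator_domain S"
    and gen: "\<forall>x\<in>generator_domain T. generator S x = generator T x"
    and x: "x \<in> generator_domain T" and s: "0 \<le> s" "s < t"
  shows "((\<lambda>h. (1/h) *\<^sub>R (S (t - (s + h)) (T (s + h) x) - S (t - s) (T s x))) \<longlongrightarrow> 0) (at_right 0)"
proof -
  have "T s x \<in> generator_domain T"
    using generator_domain_invariant[OF oc T x s(1)] .
  then have "((\<lambda>h. (1/h) *\<^sub>R (T h (T s x) - S h (T s x))) \<longlongrightarrow> 0) (at_right 0)"
    by (rule generator_extension_difference_quotient[OF sub gen])
  then have "((\<lambda>h. (1/h) *\<^sub>R (S (t - s - h) (T h (T s x)) - S (t - s) (T s x))) \<longlongrightarrow> 0)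
      (at_right 0)"
    using s by (intro convex_C0_semigroup_backward_difference_quotient[OF S]) auto
  moreover have "eventually (\<lambda>h. (1/h) *\<^sub>R (S (t - s - h) (T h (T s x)) - S (t - s) (T s x))
      = (1/h) *\<^sub>R (S (t - (s + h)) (T (s + h) x) - S (t - s) (T s x))) (at_right 0)"
    using eventually_at_right_less
  proof eventually_elim
    case (elim h)
    then show ?case
      using convex_C0_semigroup_add[OF T, where t = h and s = s] s by (simp add: algebra_simps)
  qed
  ultimately show ?thesis
    by (rule Lim_transform_eventually)
qed

lemma convex_C0_semigroups_eq_on_generator_domain:
  fixes S T :: "real \<Rightarrow> 'a::banach_lattice \<Rightarrow> 'a"
  assumes oc: "order_continuous_norm TYPE('a)"
    and S: "convex_C0_semigroup S" and T: "convex_C0_semigroup T"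
    and sub: "generator_domain T \<subseteq> generator_domain S"
    and gen: "\<forall>x\<in>generator_domain T. generator S x = generator T x"
    and x: "x \<in> generator_domain T" and t: "0 \<le> t"
  shows "S t x = T t x"
proof -
  define w where "w s = S (t - s) (T s x)" for s
  have "w t = w 0"
    unfolding w_def
    using convex_C0_semigroups_path_left_continuous[OF S T]
      convex_C0_semigroups_path_right_derivative[OF oc S T sub gen x]
    by (intro eq_of_right_derivative_zero[OF t]) auto
  then show ?thesis
    by (simp add: w_def convex_C0_semigroup_zero[OF S] convex_C0_semigroup_zero[OF T])
qed

theorem corollary3p7:
  fixes S T :: "real \<Rightarrow> 'a::banach_lattice \<Rightarrow> 'a"
  assumes "order_continuous_norm TYPE('a)"
    and "convex_C0_semigroup S"
    and "convex_C0_semigroup T"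
    and "generator_domain T \<subseteq> generator_domain S"
    and "\<forall>x\<in>generator_domain T. generator S x = generator T x"
    and "closure (generator_domain T) = UNIV"
  shows "\<forall>t\<ge>0. S t = T t"
proof (intro allI impI)
  fix t :: real
  assume t: "0 \<le> t"
  have "continuous_on UNIV (\<lambda>z. S t z - T t z)"
    using assms(2,3) t by (intro continuous_at_imp_continuous_on ballI isCont_diff
        convex_C0_semigroup_isCont)
  then have "S t z - T t z = 0" for z
    using continuous_constant_on_closure[of "generator_domain T" "\<lambda>z. S t z - T t z" 0 z]
      convex_C0_semigroups_eq_on_generator_domain[OF assms(1-5) _ t] assms(6) by simp
  then show "S t = T t"
    by (simp add: fun_eq_iff)
qed

end
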